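(* Let $G$ be a finite simple robust graph, and let $uv \in E(G)$ with $d(u) \leq 6$ and $d(v) \leq 6$. Then one of $\{u\}$, $\{v\}$, or $\{u,v\}$ is reducible in $G$.
   Context: $G$ is robust if for every $w\in V(G)$, every component of $G[N(w)]$ has at least $5$ vertices. For a set $\mathcal{S}$ of triangles, an $\mathcal{S}$-edge is an edge of a triangle in $\mathcal{S}$. A nonempty set $V_0 \subseteq V(G)$ is reducible if there exist a set $\mathcal{S}$ of pairwise edge-disjoint triangles of $G$ and a set $X \subseteq E(G)$ such that (i) $|X| \leq 2|\mathcal{S}|$; (ii) $G - X$ has no triangle containing a vertex of $V_0$; (iii) $X$ contains every $\mathcal{S}$-edge whose endpoints both lie outside $V_0$. *)

theory Defs
  imports Main
begin

definition simple_graph :: "'a set \<Rightarrow> 'a set set \<Rightarrow> bool" where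
  "simple_graph V E \<longleftrightarrow> finite V \<and> (\<forall>e\<in>E. e \<subseteq> V \<and> card e = 2)"

definition nbhd :: "'a set set \<Rightarrow> 'a \<Rightarrow> 'a set" where
  "nbhd E w = {x. {w, x} \<in> E}"

definition degree :: "'a set set \<Rightarrow> 'a \<Rightarrow> nat" where
  "degree E w = card (nbhd E w)"

definition adj_in :: "'a set set \<Rightarrow> 'a set \<Rightarrow> 'a \<Rightarrow> 'a \<Rightarrow> bool" where
  "adj_in E A x y \<longleftrightarrow> x \<in> A \<and> y \<in> A \<and> {x, y} \<in> E"

definition component_in :: "'a set set \<Rightarrow> 'a set \<Rightarrow> 'a \<Rightarrow> 'a set" where
  "component_in E A x = {y \<in> A. (adj_in E A)\<^sup>*\<^sup>* x y}"

definition robust :: "'a set \<Rightarrow> 'a set set \<Rightarrow> bool" where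
  "robust V E \<longleftrightarrow> (\<forall>w\<in>V. \<forall>x\<in>nbhd E w. card (component_in E (nbhd E w) x) \<ge> 5)"

definition triangles :: "'a set set \<Rightarrow> 'a set set" where
  "triangles E = {{a, b, c} | a b c. {a, b} \<in> E \<and> {b, c} \<in> E \<and> {a, c} \<in> E}"

definition tri_edges :: "'a set \<Rightarrow> 'a set set" where
  "tri_edges T = {e. e \<subseteq> T \<and> card e = 2}"

definition edge_disjoint :: "'a set set \<Rightarrow> bool" where
  "edge_disjoint S \<longleftrightarrow> (\<forall>T1\<in>S. \<forall>T2\<in>S. T1 \<noteq> T2 \<longrightarrow> tri_edges T1 \<inter> tri_edges T2 = {})"

definition reducible :: "'a set \<Rightarrow> 'a set set \<Rightarrow> 'a set \<Rightarrow> bool" where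
  "reducible V E V0 \<longleftrightarrow> V0 \<noteq> {} \<and> V0 \<subseteq> V \<and>
     (\<exists>S X. S \<subseteq> triangles E \<and> edge_disjoint S \<and> X \<subseteq> E \<and>
        card X \<le> 2 * card S \<and>
        (\<forall>T\<in>triangles (E - X). T \<inter> V0 = {}) \<and>
        (\<forall>T\<in>S. \<forall>e\<in>tri_edges T. e \<inter> V0 = {} \<longrightarrow> e \<in> X))"

end

(*
  Robustness forces d(u), d(v) \<in> {5, 6} and leaves no isolated vertex in the graph induced by
  any neighbourhood. If some neighbour of u (or v) is non-adjacent to two other neighbours, a
  case analysis over the adjacencies inside N(u) produces, in every case, edge-disjoint triangles
  at u and a set of at most two edges per triangle whose deletion destroys all triangles at u.
  Otherwise the complements of G[N(u)] and G[N(v)] are matchings, so u and v each have at most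
  one private neighbour; this leaves six shapes for N(u) \<union> N(v), and a case analysis over the
  adjacencies among them shows that {u, v} is reducible. Both case analyses are finite and are
  carried out by checking explicit case trees by evaluation.
*)

theory Submission
  imports Defs
begin

lemma distinct_concat_map_disjoint:
  "distinct (concat (map f xs)) \<Longrightarrow> x \<in> set xs \<Longrightarrow> y \<in> set xs \<Longrightarrow> x \<noteq> y \<Longrightarrow>
    set (f x) \<inter> set (f y) = {}"
  by (induction xs) auto

lemma distinct_of_distinct_concat_map:
  "distinct (concat (map f xs)) \<Longrightarrow> (\<And>x. f x \<noteq> []) \<Longrightarrow> distinct xs"
proof (induction xs)
  case (Cons x xs)
  obtain z where "z \<in> set (f x)" using Cons.prems(2)[of x] by (cases "f x") auto
  then have "x \<notin> set xs" using Cons.prems(1) by auto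
  then show ?case using Cons by simp
qed simp

lemma nth_mem_tl: "0 < i \<Longrightarrow> i < length xs \<Longrightarrow> xs ! i \<in> set (tl xs)"
  by (cases xs) auto

lemma nth_append_mem_middle:
  "length xs \<le> i \<Longrightarrow> i < length xs + length ys \<Longrightarrow> (xs @ ys @ zs) ! i \<in> set ys"
  by (auto simp: nth_append)

lemma edge_vertices: "simple_graph V E \<Longrightarrow> {x, y} \<in> E \<Longrightarrow> x \<in> V \<and> y \<in> V"
  by (auto simp: simple_graph_def)

lemma edge_ends_distinct: "simple_graph V E \<Longrightarrow> {x, y} \<in> E \<Longrightarrow> x \<noteq> y"
  by (auto simp: simple_graph_def)

lemma nbhd_subset: "simple_graph V E \<Longrightarrow> nbhd E w \<subseteq> V"
  by (auto simp: nbhd_def simple_graph_def)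

lemma finite_nbhd: "simple_graph V E \<Longrightarrow> finite (nbhd E w)"
  using nbhd_subset finite_subset unfolding simple_graph_def by metis

lemma not_in_nbhd_self: "simple_graph V E \<Longrightarrow> w \<notin> nbhd E w"
  by (auto simp: nbhd_def simple_graph_def)

lemma tri_edges_triangle:
  assumes "distinct [x, y, z]"
  shows "tri_edges {x, y, z} = {{x, y}, {y, z}, {x, z}}"
proof
  show "tri_edges {x, y, z} \<subseteq> {{x, y}, {y, z}, {x, z}}"
  proof
    fix e assume "e \<in> tri_edges {x, y, z}"
    then obtain p q where "e = {p, q}" "p \<noteq> q" "{p, q} \<subseteq> {x, y, z}"
      by (auto simp: tri_edges_def card_2_iff)
    then show "e \<in> {{x, y}, {y, z}, {x, z}}" by auto
  qed
  show "{{x, y}, {y, z}, {x, z}} \<subseteq> tri_edges {x, y, z}"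
    using assms by (auto simp: tri_edges_def)
qed

lemma robust_nbhd_no_isolated:
  assumes "robust V E" "w \<in> V"
  shows "\<forall>x\<in>nbhd E w. \<exists>y\<in>nbhd E w. {x, y} \<in> E"
proof
  fix x assume "x \<in> nbhd E w"
  let ?C = "component_in E (nbhd E w) x"
  have "card ?C \<ge> 5" using assms \<open>x \<in> nbhd E w\<close> by (auto simp: robust_def)
  then have "\<not> ?C \<subseteq> {x}"
    using card_mono[of "{x}" ?C] by auto
  then obtain y where "(adj_in E (nbhd E w))\<^sup>*\<^sup>* x y" "y \<noteq> x"
    by (auto simp: component_in_def)
  then show "\<exists>y\<in>nbhd E w. {x, y} \<in> E"
    by (cases rule: converse_rtranclpE) (auto simp: adj_in_def)
qed

lemma robust_degree_ge_5:
  assumes "simple_graph V E" "robust V E" "{w, x} \<in> E"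
  shows "5 \<le> degree E w"
proof -
  have "x \<in> nbhd E w" "w \<in> V" using assms(1,3) by (auto simp: nbhd_def simple_graph_def)
  then have "5 \<le> card (component_in E (nbhd E w) x)" using assms(2) by (auto simp: robust_def)
  also have "\<dots> \<le> card (nbhd E w)"
    using finite_nbhd[OF assms(1)] by (intro card_mono) (auto simp: component_in_def)
  finally show ?thesis by (simp add: degree_def)
qed

definition co_matching :: "'a set set \<Rightarrow> 'a set \<Rightarrow> bool" where
  "co_matching E N \<longleftrightarrow> (\<forall>x\<in>N. \<forall>y\<in>N. \<forall>z\<in>N. distinct [x, y, z] \<longrightarrow> {x, y} \<in> E \<or> {x, z} \<in> E)"

lemma card_private_nbhd_le_1:
  assumes "simple_graph V E" "{u, v} \<in> E" "co_matching E (nbhd E u)"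
  shows "card (nbhd E u - nbhd E v - {v}) \<le> 1"
proof -
  let ?P = "nbhd E u - nbhd E v - {v}"
  have "x = y" if x: "x \<in> ?P" and y: "y \<in> ?P" for x y
  proof (rule ccontr)
    assume "x \<noteq> y"
    with x y have "distinct [v, x, y]" by auto
    moreover have "v \<in> nbhd E u" "x \<in> nbhd E u" "y \<in> nbhd E u"
      using assms(2) x y by (auto simp: nbhd_def)
    ultimately have "{v, x} \<in> E \<or> {v, y} \<in> E"
      using assms(3) unfolding co_matching_def by blast
    with x y show False by (auto simp: nbhd_def)
  qed
  moreover have "finite ?P" using finite_nbhd[OF assms(1)] by blast
  ultimately show ?thesis by (simp add: card_le_Suc0_iff_eq)
qed

subsection \<open>Graphs on indexed vertex lists\<close>

text \<open>Index pairs are kept sorted, so that equal edges are represented by equal pairs.\<close>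

definition sort_pair :: "nat \<times> nat \<Rightarrow> nat \<times> nat" where
  "sort_pair p = (min (fst p) (snd p), max (fst p) (snd p))"

fun triangle_pairs :: "nat \<times> nat \<times> nat \<Rightarrow> (nat \<times> nat) list" where
  "triangle_pairs (a, b, c) = [sort_pair (a, b), sort_pair (b, c), sort_pair (a, c)]"

definition pair_at :: "'a list \<Rightarrow> nat \<times> nat \<Rightarrow> 'a set" where
  "pair_at vs p = {vs ! fst p, vs ! snd p}"

definition triple_at :: "'a list \<Rightarrow> nat \<times> nat \<times> nat \<Rightarrow> 'a set" where
  "triple_at vs t = (case t of (a, b, c) \<Rightarrow> {vs ! a, vs ! b, vs ! c})"

lemma pair_at_Pair [simp]: "pair_at vs (i, j) = {vs ! i, vs ! j}"
  by (simp add: pair_at_def)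

lemma pair_at_sort_pair [simp]: "pair_at vs (sort_pair p) = pair_at vs p"
  by (auto simp: pair_at_def sort_pair_def min_def max_def)

lemma triangle_pairs_ordered:
  assumes "distinct [a, b, c]" "a < n" "b < n" "c < n"
  shows "set (triangle_pairs (a, b, c)) \<subseteq> {(i, j). i < j \<and> j < n}"
  using assms by (auto simp: sort_pair_def min_def max_def)

lemma inj_on_pair_at:
  assumes "distinct vs"
  shows "inj_on (pair_at vs) {(i, j). i < j \<and> j < length vs}"
proof (rule inj_onI, clarify)
  fix i j k l
  assume "i < j" "j < length vs" "k < l" "l < length vs" "pair_at vs (i, j) = pair_at vs (k, l)"
  with assms show "i = k \<and> j = l"
    by (auto simp: pair_at_def doubleton_eq_iff nth_eq_iff_index_eq)
qed

lemma tri_edges_triple_at: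
  assumes "distinct vs" "distinct [a, b, c]" "a < length vs" "b < length vs" "c < length vs"
  shows "tri_edges (triple_at vs (a, b, c)) = pair_at vs ` set (triangle_pairs (a, b, c))"
proof -
  have "distinct [vs ! a, vs ! b, vs ! c]"
    using assms by (auto simp: nth_eq_iff_index_eq)
  then show ?thesis
    by (simp add: triple_at_def tri_edges_triangle)
qed

lemma edge_disjoint_triple_family:
  assumes vs: "distinct vs"
    and S: "\<forall>(a, b, c)\<in>set S. distinct [a, b, c] \<and> a < length vs \<and> b < length vs \<and> c < length vs"
    and disj: "distinct (concat (map triangle_pairs S))"
  shows "edge_disjoint (triple_at vs ` set S)" "card (triple_at vs ` set S) = length S"
proof -
  let ?D = "{(i, j). i < j \<and> j < length vs}"
  have edges: "tri_edges (triple_at vs t) = pair_at vs ` set (triangle_pairs t)"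
    and ordered: "set (triangle_pairs t) \<subseteq> ?D" if "t \<in> set S" for t
  proof -
    obtain a b c where t: "t = (a, b, c)" by (cases t)
    with that S have "distinct [a, b, c]" "a < length vs" "b < length vs" "c < length vs"
      by auto
    then show "tri_edges (triple_at vs t) = pair_at vs ` set (triangle_pairs t)"
      and "set (triangle_pairs t) \<subseteq> ?D"
      unfolding t by (rule tri_edges_triple_at[OF vs], rule triangle_pairs_ordered)
  qed
  have apart: "tri_edges (triple_at vs t1) \<inter> tri_edges (triple_at vs t2) = {}"
    if "t1 \<in> set S" "t2 \<in> set S" "t1 \<noteq> t2" for t1 t2
  proof -
    have "pair_at vs ` set (triangle_pairs t1) \<inter> pair_at vs ` set (triangle_pairs t2)
        = pair_at vs ` (set (triangle_pairs t1) \<inter> set (triangle_pairs t2))"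
      using inj_on_image_Int[OF inj_on_pair_at[OF vs] ordered ordered] that by simp
    then show ?thesis
      using distinct_concat_map_disjoint[OF disj that] by (simp add: edges that)
  qed
  have nonempty: "tri_edges (triple_at vs t) \<noteq> {}" if "t \<in> set S" for t
    using edges[OF that] by (cases t) simp
  have "inj_on (triple_at vs) (set S)"
  proof (rule inj_onI, rule ccontr)
    fix t1 t2 assume "t1 \<in> set S" "t2 \<in> set S" "triple_at vs t1 = triple_at vs t2" "t1 \<noteq> t2"
    then show False using apart nonempty by fastforce
  qed
  moreover have "distinct S"
  proof (rule distinct_of_distinct_concat_map[OF disj])
    show "triangle_pairs t \<noteq> []" for t by (cases t) simp
  qed
  ultimately show "card (triple_at vs ` set S) = length S"
    by (simp add: card_image distinct_card)
  show "edge_disjoint (triple_at vs ` set S)"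
    unfolding edge_disjoint_def using apart by blast
qed

lemma triangles_avoid_indexed_vertices:
  assumes sg: "simple_graph V E" and vs: "distinct vs"
    and V0: "\<forall>a\<in>set V0. a < length vs \<and> nbhd E (vs ! a) \<subseteq> set vs"
    and Z: "\<forall>p\<in>set Z. pair_at vs p \<notin> E"
    and hit: "\<forall>a\<in>set V0. \<forall>b<length vs. \<forall>c<length vs. distinct [a, b, c] \<longrightarrow>
                (\<exists>p\<in>set (triangle_pairs (a, b, c)). p \<in> set Z \<or> p \<in> set X)"
  shows "\<forall>T\<in>triangles (E - pair_at vs ` set X). T \<inter> (!) vs ` set V0 = {}"
proof -
  let ?E' = "E - pair_at vs ` set X"
  have no_triangle: False
    if E': "{w, p} \<in> ?E'" "{w, q} \<in> ?E'" "{p, q} \<in> ?E'" and a: "a \<in> set V0" "w = vs ! a"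
    for w p q a
  proof -
    have "p \<in> set vs" "q \<in> set vs" using E' a V0 by (auto simp: nbhd_def)
    then obtain b c where bc: "b < length vs" "p = vs ! b" "c < length vs" "q = vs ! c"
      by (auto simp: in_set_conv_nth)
    have "distinct [w, p, q]" using E' edge_ends_distinct[OF sg] by auto
    then have "distinct [a, b, c]" using a bc by auto
    with hit a bc obtain r where r: "r \<in> set (triangle_pairs (a, b, c))" "r \<in> set Z \<or> r \<in> set X"
      by blast
    have "pair_at vs r \<in> {{w, p}, {p, q}, {w, q}}"
      using imageI[OF r(1), of "pair_at vs"] a bc by simp
    moreover have "{{w, p}, {p, q}, {w, q}} \<subseteq> ?E'"
      using E' by (simp only: insert_subset empty_subsetI simp_thms)
    ultimately have "pair_at vs r \<in> ?E'" by (rule rev_subsetD)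
    with r(2) Z show False by blast
  qed
  show ?thesis
  proof (intro ballI equals0I)
    fix T w assume T: "T \<in> triangles ?E'" and w: "w \<in> T \<inter> (!) vs ` set V0"
    then obtain x y z where xyz: "T = {x, y, z}" "{x, y} \<in> ?E'" "{y, z} \<in> ?E'" "{x, z} \<in> ?E'"
      unfolding triangles_def by blast
    from w obtain a where a: "a \<in> set V0" "w = vs ! a" by blast
    have swap: "{y, x} = {x, y}" "{z, x} = {x, z}" "{z, y} = {y, z}" by auto
    from w xyz(1) consider "w = x" | "w = y" | "w = z" by auto
    then show False
    proof cases
      case 1 with no_triangle[of w y z a] xyz a show False by simp
    next
      case 2 with no_triangle[of w x z a] xyz a swap show False by simp
    next
      case 3 with no_triangle[of w x y a] xyz a swap show False by simp
    qed
  qed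
qed

lemma triple_at_mem_triangles:
  assumes "set (triangle_pairs t) \<subseteq> set K" "\<forall>p\<in>set K. pair_at vs p \<in> E"
  shows "triple_at vs t \<in> triangles E"
proof -
  obtain a b c where t: "t = (a, b, c)" by (cases t)
  have "pair_at vs ` set (triangle_pairs t) \<subseteq> E" using assms by blast
  then show ?thesis unfolding triangles_def t triple_at_def by auto
qed

lemma tri_edges_triple_atE:
  assumes "distinct vs" "distinct [a, b, c]" "a < length vs" "b < length vs" "c < length vs"
    and "e \<in> tri_edges (triple_at vs (a, b, c))"
  obtains i j where "(i, j) \<in> set (triangle_pairs (a, b, c))" "e = {vs ! i, vs ! j}"
proof -
  have "e \<in> pair_at vs ` set (triangle_pairs (a, b, c))"
    using assms(6) unfolding tri_edges_triple_at[OF assms(1-5)] .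
  then obtain q where "q \<in> set (triangle_pairs (a, b, c))" "e = pair_at vs q" by blast
  then show ?thesis using that by (metis pair_at_Pair prod.exhaust)
qed

subsection \<open>Case trees\<close>

text \<open>In a leaf, K and Z are the index pairs known to be edges and non-edges; S and X are the
  triangles and the deleted pairs witnessing reducibility of the vertices indexed by V0.\<close>

definition leaf_certificate ::
    "nat \<Rightarrow> nat list \<Rightarrow> (nat \<times> nat) list \<Rightarrow> (nat \<times> nat) list \<Rightarrow>
     (nat \<times> nat \<times> nat) list \<Rightarrow> (nat \<times> nat) list \<Rightarrow> bool" where
  "leaf_certificate n V0 K Z S X \<longleftrightarrow>
     V0 \<noteq> [] \<and> (\<forall>a\<in>set V0. a < n) \<and>
     (\<forall>(a, b, c)\<in>set S. distinct [a, b, c] \<and> a < n \<and> b < n \<and> c < n) \<and>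
     (\<forall>t\<in>set S. set (triangle_pairs t) \<subseteq> set K) \<and>
     distinct (concat (map triangle_pairs S)) \<and>
     (\<forall>t\<in>set S. \<forall>(i, j)\<in>set (triangle_pairs t).
        i \<in> set V0 \<or> j \<in> set V0 \<or> (i, j) \<in> set X) \<and>
     length X \<le> 2 * length S \<and>
     (\<forall>a\<in>set V0. \<forall>b\<in>set [0..<n]. \<forall>c\<in>set [0..<n]. distinct [a, b, c] \<longrightarrow>
        (\<exists>p\<in>set (triangle_pairs (a, b, c)). p \<in> set Z \<or> p \<in> set X))"

lemma reducible_of_leaf_certificate:
  assumes sg: "simple_graph V E" and vs: "distinct vs" "set vs \<subseteq> V" "length vs = n"
    and closed: "\<forall>a\<in>set V0. nbhd E (vs ! a) \<subseteq> set vs"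
    and K: "\<forall>p\<in>set K. pair_at vs p \<in> E" and Z: "\<forall>p\<in>set Z. pair_at vs p \<notin> E"
    and leaf: "leaf_certificate n V0 K Z S X"
  shows "reducible V E ((!) vs ` set V0)"
proof -
  let ?S = "triple_at vs ` set S" and ?X = "pair_at vs ` set X \<inter> E" and ?V0 = "(!) vs ` set V0"
  from leaf obtain V0ne: "V0 \<noteq> []" and V0n: "\<forall>a\<in>set V0. a < n"
    and S': "\<forall>(a, b, c)\<in>set S. distinct [a, b, c] \<and> a < n \<and> b < n \<and> c < n"
    and SK: "\<forall>t\<in>set S. set (triangle_pairs t) \<subseteq> set K"
    and Sdisj: "distinct (concat (map triangle_pairs S))"
    and forced: "\<forall>t\<in>set S. \<forall>(i, j)\<in>set (triangle_pairs t).
      i \<in> set V0 \<or> j \<in> set V0 \<or> (i, j) \<in> set X"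
    and Xlen: "length X \<le> 2 * length S"
    and hit: "\<forall>a\<in>set V0. \<forall>b\<in>set [0..<n]. \<forall>c\<in>set [0..<n]. distinct [a, b, c] \<longrightarrow>
        (\<exists>p\<in>set (triangle_pairs (a, b, c)). p \<in> set Z \<or> p \<in> set X)"
    unfolding leaf_certificate_def by (elim conjE) (rule that)
  have S: "\<forall>(a, b, c)\<in>set S. distinct [a, b, c] \<and> a < length vs \<and> b < length vs \<and> c < length vs"
    using S' vs(3) by simp
  have family: "edge_disjoint ?S" "card ?S = length S"
    using edge_disjoint_triple_family[OF vs(1) S Sdisj] by simp_all
  have "?S \<subseteq> triangles E" using SK K triple_at_mem_triangles by blast
  moreover have "card ?X \<le> 2 * card ?S"
  proof -
    have "card ?X \<le> card (pair_at vs ` set X)" by (intro card_mono) auto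
    also have "\<dots> \<le> length X" using card_image_le card_length le_trans by blast
    finally show ?thesis using Xlen family(2) by simp
  qed
  moreover have "\<forall>T\<in>triangles (E - ?X). T \<inter> ?V0 = {}"
  proof -
    have "E - ?X = E - pair_at vs ` set X" by blast
    then show ?thesis
      using triangles_avoid_indexed_vertices[OF sg vs(1), of V0 Z X] V0n hit closed Z vs(3) by simp
  qed
  moreover have "\<forall>T\<in>?S. \<forall>e\<in>tri_edges T. e \<inter> ?V0 = {} \<longrightarrow> e \<in> ?X"
  proof (intro ballI impI)
    fix T e assume T: "T \<in> ?S" and e: "e \<in> tri_edges T" and off: "e \<inter> ?V0 = {}"
    from T obtain a b c where abc: "(a, b, c) \<in> set S" "T = triple_at vs (a, b, c)" by force
    have "distinct [a, b, c]" "a < length vs" "b < length vs" "c < length vs"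
      using S abc(1) by auto
    from tri_edges_triple_atE[OF vs(1) this e[unfolded abc(2)]]
    obtain i j where ij: "(i, j) \<in> set (triangle_pairs (a, b, c))" "e = {vs ! i, vs ! j}" .
    have "i \<notin> set V0" "j \<notin> set V0" using off ij(2) by auto
    then have "(i, j) \<in> set X" using bspec[OF bspec[OF forced abc(1)] ij(1)] by simp
    moreover have "(i, j) \<in> set K" using SK abc(1) ij(1) by blast
    with K ij(2) have "e \<in> E" by force
    ultimately show "e \<in> ?X" using ij(2) by force
  qed
  moreover have "?V0 \<noteq> {}" "?V0 \<subseteq> V" using V0ne V0n vs by auto
  ultimately show ?thesis
    unfolding reducible_def using family(1) by blast
qed

text \<open>A case tree covers all adjacency patterns on the indexed vertices that are consistent
  with the known edges K, the known non-edges Z and the clauses C, where each clause lists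
  index pairs at least one of which is an edge; Refute i closes a branch contradicting clause i.\<close>

datatype case_tree =
    Leaf "(nat \<times> nat \<times> nat) list" "(nat \<times> nat) list"
  | Refute nat
  | Branch "nat \<times> nat" case_tree case_tree

fun check_case_tree ::
    "nat \<Rightarrow> nat list \<Rightarrow> (nat \<times> nat) list list \<Rightarrow> (nat \<times> nat) list \<Rightarrow> (nat \<times> nat) list \<Rightarrow>
     case_tree \<Rightarrow> bool" where
  "check_case_tree n V0 C K Z (Leaf S X) = leaf_certificate n V0 K Z S X"
| "check_case_tree n V0 C K Z (Refute i) = (i < length C \<and> set (C ! i) \<subseteq> set Z)"
| "check_case_tree n V0 C K Z (Branch p t1 t2) =
     (check_case_tree n V0 C (p # K) Z t1 \<and> check_case_tree n V0 C K (p # Z) t2)"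

lemma reducible_of_check_case_tree:
  assumes sg: "simple_graph V E" and vs: "distinct vs" "set vs \<subseteq> V" "length vs = n"
    and closed: "\<forall>a\<in>set V0. nbhd E (vs ! a) \<subseteq> set vs"
    and C: "\<forall>c\<in>set C. \<exists>p\<in>set c. pair_at vs p \<in> E"
  shows "check_case_tree n V0 C K Z t \<Longrightarrow> \<forall>p\<in>set K. pair_at vs p \<in> E \<Longrightarrow>
    \<forall>p\<in>set Z. pair_at vs p \<notin> E \<Longrightarrow> reducible V E ((!) vs ` set V0)"
proof (induction t arbitrary: K Z)
  case (Leaf S X)
  then show ?case using reducible_of_leaf_certificate[OF sg vs closed] by simp
next
  case (Refute i)
  then have "C ! i \<in> set C" by simp
  then obtain p where "p \<in> set (C ! i)" "pair_at vs p \<in> E" using C by blast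
  with Refute.prems show ?case by auto
next
  case (Branch p t1 t2)
  then show ?case by (cases "pair_at vs p \<in> E") auto
qed

definition hub_pairs :: "nat \<Rightarrow> (nat \<times> nat) list" where
  "hub_pairs n = map (\<lambda>i. (0, i)) [1..<n]"

definition no_isolated_clauses :: "nat \<Rightarrow> (nat \<times> nat) list list" where
  "no_isolated_clauses n =
     map (\<lambda>i. map (\<lambda>j. sort_pair (i, j)) (filter (\<lambda>j. j \<noteq> i) [1..<n])) [1..<n]"

definition co_matching_clauses :: "nat list \<Rightarrow> (nat \<times> nat) list list" where
  "co_matching_clauses W =
     [[sort_pair (x, y), sort_pair (x, z)]. x \<leftarrow> W, y \<leftarrow> W, z \<leftarrow> W, distinct [x, y, z]]"

definition edge_case_shapes :: "(nat \<times> nat \<times> nat) set" where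
  "edge_case_shapes = {(5, 0, 0), (4, 0, 0), (4, 1, 0), (4, 0, 1), (4, 1, 1), (3, 1, 1)}"

text \<open>In the edge case the vertex list is u, v, the common neighbours, the private neighbours
  of u and the private neighbours of v.\<close>

definition common_idx :: "nat \<Rightarrow> nat list" where
  "common_idx nI = [2..<2 + nI]"

definition private_u_idx :: "nat \<Rightarrow> nat \<Rightarrow> nat list" where
  "private_u_idx nI nA = [2 + nI..<2 + nI + nA]"

definition private_v_idx :: "nat \<Rightarrow> nat \<Rightarrow> nat \<Rightarrow> nat list" where
  "private_v_idx nI nA nB = [2 + nI + nA..<2 + nI + nA + nB]"

definition edge_known_pairs :: "nat \<Rightarrow> nat \<Rightarrow> nat \<Rightarrow> (nat \<times> nat) list" where
  "edge_known_pairs nI nA nB =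
     (0, 1) # map (\<lambda>i. (0, i)) (common_idx nI @ private_u_idx nI nA)
       @ map (\<lambda>i. (1, i)) (common_idx nI @ private_v_idx nI nA nB)"

definition edge_known_nonpairs :: "nat \<Rightarrow> nat \<Rightarrow> nat \<Rightarrow> (nat \<times> nat) list" where
  "edge_known_nonpairs nI nA nB =
     map (\<lambda>i. (0, i)) (private_v_idx nI nA nB) @ map (\<lambda>i. (1, i)) (private_u_idx nI nA)"

definition edge_clauses :: "nat \<Rightarrow> nat \<Rightarrow> nat \<Rightarrow> (nat \<times> nat) list list" where
  "edge_clauses nI nA nB =
     co_matching_clauses (1 # common_idx nI @ private_u_idx nI nA)
       @ co_matching_clauses (0 # common_idx nI @ private_v_idx nI nA nB)"

text \<open>The case trees were found by a computer search; their correctness is established by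
  evaluating the checker.\<close>


definition cert_vertex_5 :: case_tree where
  "cert_vertex_5 = (Branch (1,4) (Branch (2,3) (Leaf [(0,1,4),(0,2,3)] [(1,4),(2,3),(0,4),(0,5)]) (Branch (2,5) (Leaf [(0,1,4),(0,2,5)] [(1,4),(2,5),(0,4),(0,5)]) (Branch (2,4) (Branch (1,5) (Leaf [(0,1,5),(0,2,4)] [(1,5),(2,4),(0,3),(0,4)]) (Branch (3,5) (Leaf [(0,1,4),(0,3,5)] [(1,4),(3,5),(0,4)]) (Leaf [(0,1,4)] [(1,4),(0,4)]))) (Refute 1)))) (Branch (1,5) (Branch (2,3) (Leaf [(0,1,5),(0,2,3)] [(1,5),(2,3),(0,4),(0,5)]) (Branch (2,4) (Leaf [(0,1,5),(0,2,4)] [(1,5),(2,4),(0,3),(0,5)]) (Branch (3,4) (Leaf [(0,1,5),(0,3,4)] [(1,5),(3,4),(0,5)]) (Leaf [(0,1,5)] [(1,5),(0,5)])))) (Refute 0)))"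

definition cert_vertex_6 :: case_tree where
  "cert_vertex_6 = (Branch (1,4) (Branch (1,5) (Branch (1,6) (Branch (2,3) (Branch (4,5) (Leaf [(0,1,6),(0,2,3),(0,4,5)] [(1,6),(2,3),(4,5),(0,4),(0,5),(0,6)]) (Branch (4,6) (Leaf [(0,1,5),(0,2,3),(0,4,6)] [(1,5),(2,3),(4,6),(0,4),(0,5),(0,6)]) (Branch (5,6) (Leaf [(0,1,4),(0,2,3),(0,5,6)] [(1,4),(2,3),(5,6),(0,1),(0,2),(0,3)]) (Branch (2,4) (Branch (3,5) (Leaf [(0,1,6),(0,2,4),(0,3,5)] [(1,6),(2,4),(3,5),(0,1),(0,2),(0,3)]) (Branch (2,5) (Branch (3,4) (Leaf [(0,1,6),(0,2,5),(0,3,4)] [(1,6),(2,5),(3,4),(0,1),(0,2),(0,3)]) (Branch (3,6) (Leaf [(0,1,4),(0,2,5),(0,3,6)] [(1,4),(2,5),(3,6),(0,1),(0,2)]) (Leaf [(0,1,4),(0,2,3)] [(1,4),(2,3),(0,1),(0,2)]))) (Leaf [(0,1,5),(0,2,3)] [(1,5),(2,3),(0,4),(0,6)]))) (Branch (3,4) (Branch (2,5) (Leaf [(0,1,6),(0,2,5),(0,3,4)] [(1,6),(2,5),(3,4),(0,1),(0,2),(0,3)]) (Branch (2,6) (Leaf [(0,1,5),(0,2,6),(0,3,4)] [(1,5),(2,6),(3,4),(0,1),(0,3)]) (Leaf [(0,1,4),(0,2,3)] [(1,4),(2,3),(0,1),(0,3)]))) (Leaf [(0,1,4),(0,2,3)]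 [(1,4),(2,3),(0,5),(0,6)])))))) (Branch (2,4) (Branch (3,5) (Leaf [(0,1,6),(0,2,4),(0,3,5)] [(1,6),(2,4),(3,5),(0,4),(0,5),(0,6)]) (Branch (2,5) (Branch (3,4) (Leaf [(0,1,6),(0,2,5),(0,3,4)] [(1,6),(2,5),(3,4),(0,1),(0,4),(0,6)]) (Branch (3,6) (Leaf [(0,1,4),(0,2,5),(0,3,6)] [(1,4),(2,5),(3,6),(0,1),(0,4),(0,6)]) (Refute 2))) (Leaf [(0,1,5),(0,2,4)] [(1,5),(2,4),(0,4),(0,6)]))) (Branch (2,5) (Branch (3,4) (Leaf [(0,1,6),(0,2,5),(0,3,4)] [(1,6),(2,5),(3,4),(0,1),(0,5),(0,6)]) (Leaf [(0,1,4),(0,2,5)] [(1,4),(2,5),(0,5),(0,6)])) (Branch (2,6) (Branch (3,4) (Leaf [(0,1,5),(0,2,6),(0,3,4)] [(1,5),(2,6),(3,4),(0,1),(0,5),(0,6)]) (Leaf [(0,1,4),(0,2,6)] [(1,4),(2,6),(0,5),(0,6)])) (Refute 1))))) (Branch (2,3) (Branch (4,6) (Leaf [(0,1,5),(0,2,3),(0,4,6)] [(1,5),(2,3),(4,6),(0,4),(0,5),(0,6)]) (Branch (5,6) (Leaf [(0,1,4),(0,2,3),(0,5,6)] [(1,4),(2,3),(5,6),(0,2),(0,3),(0,5)]) (Branch (2,4) (Branch (3,6) (Leaf [(0,1,5),(0,2,4),(0,3,6)] [(1,5),(2,4),(3,6),(0,2),(0,3),(0,4)]) (Branch (2,6) (Branch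 (3,4) (Leaf [(0,1,4),(0,2,6),(2,3,4)] [(1,4),(2,3),(2,4),(2,6),(3,4),(0,5)]) (Leaf [(0,1,4),(0,2,3)] [(1,4),(2,3),(0,2),(0,5)])) (Refute 5))) (Branch (2,6) (Leaf [(0,1,4),(0,2,6)] [(1,4),(2,6),(0,3),(0,5)]) (Leaf [(0,1,4),(0,2,3)] [(1,4),(2,3),(0,3),(0,5)]))))) (Branch (2,4) (Branch (3,6) (Leaf [(0,1,5),(0,2,4),(0,3,6)] [(1,5),(2,4),(3,6),(0,2),(0,4),(0,5)]) (Branch (2,6) (Leaf [(0,1,4),(0,2,6)] [(1,4),(2,6),(0,4),(0,5)]) (Leaf [(0,1,5),(0,2,4)] [(1,5),(2,4),(0,4),(0,5)]))) (Branch (2,5) (Branch (3,4) (Branch (2,6) (Leaf [(0,1,5),(0,2,6),(0,3,4)] [(1,5),(2,6),(3,4),(0,1),(0,5),(0,6)]) (Branch (3,6) (Leaf [(0,1,4),(0,2,5),(0,3,6)] [(1,4),(2,5),(3,6),(0,4),(0,5)]) (Leaf [(0,1,4),(0,2,5)] [(1,4),(2,5),(0,4),(0,5)]))) (Leaf [(0,1,4),(0,2,5)] [(1,4),(2,5),(0,5),(0,6)])) (Branch (2,6) (Branch (3,4) (Leaf [(0,1,5),(0,2,6),(0,3,4)] [(1,5),(2,6),(3,4),(0,1),(0,5),(0,6)]) (Leaf [(0,1,4),(0,2,6)] [(1,4),(2,6),(0,5),(0,6)])) (Refute 1)))))) (Branch (1,6) (Branch (2,3) (Branch (4,5) (Leaf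 [(0,1,6),(0,2,3),(0,4,5)] [(1,6),(2,3),(4,5),(0,4),(0,5),(0,6)]) (Branch (5,6) (Leaf [(0,1,4),(0,2,3),(0,5,6)] [(1,4),(2,3),(5,6),(0,2),(0,3),(0,6)]) (Branch (2,4) (Branch (3,5) (Leaf [(0,1,6),(0,2,4),(0,3,5)] [(1,6),(2,4),(3,5),(0,2),(0,3),(0,4)]) (Branch (2,5) (Branch (3,4) (Leaf [(0,1,4),(0,2,5),(2,3,4)] [(1,4),(2,3),(2,4),(2,5),(3,4),(0,6)]) (Leaf [(0,1,4),(0,2,3)] [(1,4),(2,3),(0,2),(0,6)])) (Refute 4))) (Branch (2,5) (Leaf [(0,1,4),(0,2,5)] [(1,4),(2,5),(0,3),(0,6)]) (Leaf [(0,1,4),(0,2,3)] [(1,4),(2,3),(0,3),(0,6)]))))) (Branch (2,4) (Branch (3,5) (Leaf [(0,1,6),(0,2,4),(0,3,5)] [(1,6),(2,4),(3,5),(0,2),(0,4),(0,6)]) (Branch (2,5) (Leaf [(0,1,4),(0,2,5)] [(1,4),(2,5),(0,4),(0,6)]) (Leaf [(0,1,6),(0,2,4)] [(1,6),(2,4),(0,4),(0,6)]))) (Branch (2,5) (Branch (3,4) (Leaf [(0,1,6),(0,2,5),(0,3,4)] [(1,6),(2,5),(3,4),(0,1),(0,5),(0,6)]) (Leaf [(0,1,4),(0,2,5)] [(1,4),(2,5),(0,5),(0,6)])) (Branch (2,6) (Branch (3,5) (Leaf [(0,1,4),(0,2,6),(0,3,5)] [(1,4),(2,6),(3,5),(0,4),(0,6)])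 (Leaf [(0,1,4),(0,2,6)] [(1,4),(2,6),(0,4),(0,6)])) (Refute 1))))) (Branch (2,3) (Branch (5,6) (Leaf [(0,1,4),(0,2,3),(0,5,6)] [(1,4),(2,3),(5,6),(0,2),(0,3),(0,4)]) (Branch (2,4) (Branch (2,5) (Branch (2,6) (Branch (3,5) (Leaf [(0,1,4),(0,2,6),(0,3,5)] [(1,4),(2,6),(3,5),(0,2),(0,3),(0,4)]) (Branch (3,6) (Leaf [(0,1,4),(0,2,5),(0,3,6)] [(1,4),(2,5),(3,6),(0,2),(0,4)]) (Leaf [(0,1,4),(0,2,3)] [(1,4),(2,3),(0,2),(0,4)]))) (Leaf [(0,1,4),(0,2,5)] [(1,4),(2,5),(0,3),(0,4)])) (Branch (2,6) (Leaf [(0,1,4),(0,2,6)] [(1,4),(2,6),(0,3),(0,4)]) (Leaf [(0,1,4),(0,2,3)] [(1,4),(2,3),(0,3),(0,4)]))) (Branch (3,4) (Branch (2,5) (Branch (2,6) (Branch (3,5) (Leaf [(0,1,4),(0,2,6),(0,3,5)] [(1,4),(2,6),(3,5),(0,2),(0,3),(0,4)]) (Branch (3,6) (Leaf [(0,1,4),(0,2,5),(0,3,6)] [(1,4),(2,5),(3,6),(0,2),(0,4)]) (Leaf [(0,1,4),(0,2,3)] [(1,4),(2,3),(0,2),(0,4)]))) (Leaf [(0,1,4),(0,2,5)] [(1,4),(2,5),(0,3),(0,4)])) (Branch (2,6) (Leaf [(0,1,4),(0,2,6)] [(1,4),(2,6),(0,3),(0,4)]) (Leaf [(0,1,4),(0,2,3)]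 [(1,4),(2,3),(0,3),(0,4)]))) (Leaf [(0,1,4),(0,2,3)] [(1,4),(2,3),(0,5),(0,6)])))) (Branch (2,4) (Branch (2,5) (Branch (3,5) (Branch (2,6) (Leaf [(0,1,4),(0,2,6),(0,3,5)] [(1,4),(2,6),(3,5),(0,2),(0,4),(0,6)]) (Branch (3,6) (Leaf [(0,1,4),(0,2,5),(0,3,6)] [(1,4),(2,5),(3,6),(0,4),(0,5)]) (Leaf [(0,1,4),(0,2,5)] [(1,4),(2,5),(0,4),(0,5)]))) (Leaf [(0,1,4),(0,2,5)] [(1,4),(2,5),(0,4),(0,6)])) (Branch (3,5) (Leaf [(0,1,4),(0,3,5)] [(1,4),(3,5),(0,4),(0,6)]) (Branch (2,6) (Leaf [(0,1,4),(0,2,6)] [(1,4),(2,6),(0,4),(0,6)]) (Branch (3,6) (Leaf [(0,1,4),(0,3,6)] [(1,4),(3,6),(0,4),(0,5)]) (Branch (5,6) (Leaf [(0,1,4),(0,5,6)] [(1,4),(5,6),(0,4)]) (Leaf [(0,1,4)] [(1,4),(0,4)])))))) (Branch (2,5) (Branch (3,4) (Branch (3,5) (Branch (4,5) (Leaf [(0,1,4),(0,2,5),(3,4,5)] [(1,4),(2,5),(3,4),(3,5),(4,5),(0,6)]) (Leaf [(0,1,4),(0,2,5)] [(1,4),(2,5),(0,3),(0,6)])) (Leaf [(0,1,4),(0,2,5)] [(1,4),(2,5),(0,4),(0,6)])) (Leaf [(0,1,4),(0,2,5)] [(1,4),(2,5),(0,5),(0,6)])) (Branch (2,6) (Branch (3,5)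 (Leaf [(0,1,4),(0,2,6),(0,3,5)] [(1,4),(2,6),(3,5),(0,4),(0,6)]) (Leaf [(0,1,4),(0,2,6)] [(1,4),(2,6),(0,4),(0,6)])) (Refute 1))))))) (Branch (1,5) (Branch (1,6) (Branch (2,3) (Branch (4,5) (Leaf [(0,1,6),(0,2,3),(0,4,5)] [(1,6),(2,3),(4,5),(0,4),(0,5),(0,6)]) (Branch (4,6) (Leaf [(0,1,5),(0,2,3),(0,4,6)] [(1,5),(2,3),(4,6),(0,2),(0,3),(0,6)]) (Branch (2,4) (Branch (2,5) (Branch (2,6) (Branch (3,4) (Leaf [(0,1,5),(0,2,6),(0,3,4)] [(1,5),(2,6),(3,4),(0,2),(0,3),(0,6)]) (Branch (3,5) (Leaf [(0,1,5),(0,2,4),(2,3,5)] [(1,5),(2,3),(2,4),(2,5),(3,5),(0,6)]) (Leaf [(0,1,5),(0,2,3)] [(1,5),(2,3),(0,2),(0,6)]))) (Leaf [(0,1,6),(0,2,4)] [(1,6),(2,4),(0,3),(0,5)])) (Leaf [(0,1,5),(0,2,4)] [(1,5),(2,4),(0,3),(0,6)])) (Branch (2,5) (Branch (3,4) (Leaf [(0,1,6),(0,2,5),(0,3,4)] [(1,6),(2,5),(3,4),(0,1),(0,3),(0,6)]) (Refute 3)) (Leaf [(0,1,5),(0,2,3)] [(1,5),(2,3),(0,3),(0,6)]))))) (Branch (2,4) (Branch (3,4) (Branch (2,5) (Leaf [(0,1,6),(0,2,5),(0,3,4)] [(1,6),(2,5),(3,4),(0,2),(0,5),(0,6)]) (Branch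 (3,5) (Leaf [(0,1,6),(0,2,4),(0,3,5)] [(1,6),(2,4),(3,5),(0,1),(0,4),(0,6)]) (Leaf [(0,1,5),(0,2,4)] [(1,5),(2,4),(0,4),(0,6)]))) (Leaf [(0,1,5),(0,2,4)] [(1,5),(2,4),(0,5),(0,6)])) (Branch (3,4) (Leaf [(0,1,5),(0,3,4)] [(1,5),(3,4),(0,5),(0,6)]) (Branch (2,5) (Leaf [(0,1,6),(0,2,5)] [(1,6),(2,5),(0,5),(0,6)]) (Branch (2,6) (Leaf [(0,1,5),(0,2,6)] [(1,5),(2,6),(0,5),(0,6)]) (Refute 1)))))) (Branch (2,3) (Branch (4,6) (Leaf [(0,1,5),(0,2,3),(0,4,6)] [(1,5),(2,3),(4,6),(0,2),(0,3),(0,5)]) (Branch (2,4) (Branch (2,6) (Branch (3,4) (Leaf [(0,1,5),(0,2,6),(0,3,4)] [(1,5),(2,6),(3,4),(0,2),(0,3),(0,5)]) (Branch (3,6) (Leaf [(0,1,5),(0,2,4),(0,3,6)] [(1,5),(2,4),(3,6),(0,2),(0,5)]) (Leaf [(0,1,5),(0,2,3)] [(1,5),(2,3),(0,2),(0,5)]))) (Leaf [(0,1,5),(0,2,4)] [(1,5),(2,4),(0,3),(0,5)])) (Branch (2,6) (Leaf [(0,1,5),(0,2,6)] [(1,5),(2,6),(0,3),(0,5)]) (Leaf [(0,1,5),(0,2,3)] [(1,5),(2,3),(0,3),(0,5)])))) (Branch (2,4) (Branch (3,4) (Branch (2,6) (Leaf [(0,1,5),(0,2,6),(0,3,4)] [(1,5),(2,6),(3,4),(0,2),(0,5),(0,6)])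 (Branch (3,6) (Leaf [(0,1,5),(0,2,4),(0,3,6)] [(1,5),(2,4),(3,6),(0,4),(0,5)]) (Leaf [(0,1,5),(0,2,4)] [(1,5),(2,4),(0,4),(0,5)]))) (Leaf [(0,1,5),(0,2,4)] [(1,5),(2,4),(0,5),(0,6)])) (Branch (3,4) (Leaf [(0,1,5),(0,3,4)] [(1,5),(3,4),(0,5),(0,6)]) (Branch (2,6) (Leaf [(0,1,5),(0,2,6)] [(1,5),(2,6),(0,5),(0,6)]) (Branch (2,5) (Branch (3,6) (Leaf [(0,1,5),(0,3,6)] [(1,5),(3,6),(0,4),(0,5)]) (Branch (4,6) (Leaf [(0,1,5),(0,4,6)] [(1,5),(4,6),(0,5)]) (Leaf [(0,1,5)] [(1,5),(0,5)]))) (Refute 1))))))) (Branch (1,6) (Branch (2,3) (Branch (4,5) (Leaf [(0,1,6),(0,2,3),(0,4,5)] [(1,6),(2,3),(4,5),(0,2),(0,3),(0,6)]) (Branch (2,4) (Branch (2,5) (Branch (3,4) (Leaf [(0,1,6),(0,2,5),(0,3,4)] [(1,6),(2,5),(3,4),(0,2),(0,3),(0,6)]) (Branch (3,5) (Leaf [(0,1,6),(0,2,4),(0,3,5)] [(1,6),(2,4),(3,5),(0,2),(0,6)]) (Leaf [(0,1,6),(0,2,3)] [(1,6),(2,3),(0,2),(0,6)]))) (Leaf [(0,1,6),(0,2,4)] [(1,6),(2,4),(0,3),(0,6)])) (Branch (2,5) (Leaf [(0,1,6),(0,2,5)] [(1,6),(2,5),(0,3),(0,6)]) (Leaf [(0,1,6),(0,2,3)]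 [(1,6),(2,3),(0,3),(0,6)])))) (Branch (2,4) (Branch (3,4) (Branch (2,5) (Leaf [(0,1,6),(0,2,5),(0,3,4)] [(1,6),(2,5),(3,4),(0,2),(0,5),(0,6)]) (Branch (3,5) (Leaf [(0,1,6),(0,2,4),(0,3,5)] [(1,6),(2,4),(3,5),(0,4),(0,6)]) (Leaf [(0,1,6),(0,2,4)] [(1,6),(2,4),(0,4),(0,6)]))) (Leaf [(0,1,6),(0,2,4)] [(1,6),(2,4),(0,5),(0,6)])) (Branch (3,4) (Leaf [(0,1,6),(0,3,4)] [(1,6),(3,4),(0,5),(0,6)]) (Branch (2,5) (Leaf [(0,1,6),(0,2,5)] [(1,6),(2,5),(0,5),(0,6)]) (Branch (2,6) (Branch (3,5) (Leaf [(0,1,6),(0,3,5)] [(1,6),(3,5),(0,4),(0,6)]) (Branch (4,5) (Leaf [(0,1,6),(0,4,5)] [(1,6),(4,5),(0,6)]) (Leaf [(0,1,6)] [(1,6),(0,6)]))) (Refute 1)))))) (Refute 0))))"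

definition cert_edge_5_0_0 :: case_tree where
  "cert_edge_5_0_0 = (Branch (2,3) (Branch (2,4) (Branch (2,5) (Branch (2,6) (Branch (3,4) (Branch (3,5) (Leaf [(0,1,4),(0,2,5),(1,2,6),(1,3,5),(2,3,4)] [(2,3),(2,4),(2,5),(2,6),(3,4),(3,5),(0,1),(0,6),(1,6),(4,5)]) (Leaf [(0,1,6),(0,2,3),(1,2,5),(1,3,4)] [(2,3),(2,5),(3,4),(0,1),(0,4),(0,6),(1,4),(1,6)])) (Branch (3,5) (Leaf [(0,1,6),(0,2,3),(1,2,4),(1,3,5)] [(2,3),(2,4),(3,5),(0,1),(0,5),(0,6),(1,5),(1,6)]) (Refute 50))) (Branch (3,6) (Leaf [(0,1,4),(0,2,3),(1,2,5),(1,3,6)] [(2,3),(2,5),(3,6),(0,1),(0,4),(0,5),(1,4),(1,5)]) (Refute 105))) (Branch (3,5) (Leaf [(0,1,6),(0,2,3),(1,2,4),(1,3,5)] [(2,3),(2,4),(3,5),(0,1),(0,4),(0,6),(1,4),(1,6)]) (Refute 85))) (Branch (2,5) (Branch (3,4) (Leaf [(0,1,6),(0,2,3),(1,2,5),(1,3,4)] [(2,3),(2,5),(3,4),(0,1),(0,5),(0,6),(1,5),(1,6)]) (Refute 65)) (Refute 30))) (Branch (2,4) (Branch (2,5) (Branch (3,4) (Leaf [(0,1,6),(0,2,4),(1,2,5),(1,3,4)] [(2,4),(2,5),(3,4),(0,1),(0,5),(0,6),(1,5),(1,6)]) (Refute 45)) (Refute 26)) (Refute 25)))"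

definition cert_edge_4_0_0 :: case_tree where
  "cert_edge_4_0_0 = (Branch (2,3) (Branch (2,4) (Leaf [(0,1,5),(0,2,3),(1,2,4)] [(2,3),(2,4),(0,1),(0,5),(1,5),(3,4)]) (Branch (2,5) (Leaf [(0,1,4),(0,2,3),(1,2,5)] [(2,3),(2,5),(0,1),(0,3),(1,3),(4,5)]) (Refute 20))) (Branch (2,4) (Branch (2,5) (Leaf [(0,1,3),(0,2,4),(1,2,5)] [(2,4),(2,5),(0,1),(0,3),(1,3),(4,5)]) (Refute 17)) (Refute 16)))"

definition cert_edge_4_1_0 :: case_tree where
  "cert_edge_4_1_0 = (Branch (2,6) (Branch (3,6) (Branch (4,6) (Branch (5,6) (Branch (2,3) (Branch (2,4) (Leaf [(0,1,5),(0,2,3),(0,4,6),(1,2,4)] [(2,3),(2,4),(4,6),(0,1),(0,5),(0,6),(1,5),(3,4)]) (Branch (2,5) (Leaf [(0,1,4),(0,2,3),(0,5,6),(1,2,5)] [(2,3),(2,5),(5,6),(0,1),(0,3),(0,6),(1,3),(4,5)]) (Refute 30))) (Branch (2,4) (Branch (2,5) (Leaf [(0,1,3),(0,2,4),(0,5,6),(1,2,5)] [(2,4),(2,5),(5,6),(0,1),(0,3),(0,6),(1,3),(4,5)]) (Refute 26)) (Refute 25))) (Refute 103)) (Refute 102)) (Refute 101)) (Refute 100))"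

definition cert_edge_4_0_1 :: case_tree where
  "cert_edge_4_0_1 = (Branch (2,6) (Branch (3,6) (Branch (4,6) (Branch (5,6) (Branch (2,3) (Branch (2,4) (Leaf [(0,1,5),(0,2,3),(1,2,4),(1,3,6)] [(2,3),(2,4),(3,6),(0,1),(0,5),(1,5),(1,6),(3,4)]) (Branch (2,5) (Leaf [(0,1,4),(0,2,3),(1,2,5),(1,3,6)] [(2,3),(2,5),(3,6),(0,1),(0,3),(1,3),(1,6),(4,5)]) (Refute 20))) (Branch (2,4) (Branch (2,5) (Leaf [(0,1,3),(0,2,4),(1,2,5),(1,4,6)] [(2,4),(2,5),(4,6),(0,1),(0,3),(1,3),(1,6),(4,5)]) (Refute 17)) (Refute 16))) (Refute 163)) (Refute 162)) (Refute 161)) (Refute 160))"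

definition cert_edge_4_1_1 :: case_tree where
  "cert_edge_4_1_1 = (Branch (2,6) (Branch (2,7) (Branch (3,6) (Branch (3,7) (Branch (4,6) (Branch (4,7) (Branch (5,6) (Branch (5,7) (Branch (2,3) (Branch (2,4) (Leaf [(0,1,5),(0,2,3),(0,4,6),(1,2,4),(1,3,7)] [(2,3),(2,4),(3,7),(4,6),(0,1),(0,5),(0,6),(1,5),(1,7),(3,4)]) (Branch (2,5) (Leaf [(0,1,4),(0,2,3),(0,5,6),(1,2,5),(1,3,7)] [(2,3),(2,5),(3,7),(5,6),(0,1),(0,3),(0,6),(1,3),(1,7),(4,5)]) (Refute 30))) (Branch (2,4) (Branch (2,5) (Leaf [(0,1,3),(0,2,4),(0,5,6),(1,2,5),(1,4,7)] [(2,4),(2,5),(4,7),(5,6),(0,1),(0,3),(0,6),(1,3),(1,7),(4,5)]) (Refute 26)) (Refute 25))) (Refute 223)) (Refute 103)) (Refute 222)) (Refute 102)) (Refute 221)) (Refute 101)) (Refute 220)) (Refute 100))"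

definition cert_edge_3_1_1 :: case_tree where
  "cert_edge_3_1_1 = (Branch (2,5) (Branch (3,6) (Leaf [(0,1,4),(0,2,5),(1,3,6)] [(2,5),(3,6),(0,3),(0,4),(1,2),(1,4)]) (Refute 109)) (Refute 48))"

lemma cert_vertex_5_valid:
  "check_case_tree 6 [0] (no_isolated_clauses 6) (hub_pairs 6) [(1, 2), (1, 3)] cert_vertex_5"
  by code_simp

lemma cert_vertex_6_valid:
  "check_case_tree 7 [0] (no_isolated_clauses 7) (hub_pairs 7) [(1, 2), (1, 3)] cert_vertex_6"
  by code_simp

lemma cert_edge_5_0_0_valid:
  "check_case_tree 7 [0, 1] (edge_clauses 5 0 0) (edge_known_pairs 5 0 0) (edge_known_nonpairs 5 0 0)
    cert_edge_5_0_0"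
  by code_simp

lemma cert_edge_4_0_0_valid:
  "check_case_tree 6 [0, 1] (edge_clauses 4 0 0) (edge_known_pairs 4 0 0) (edge_known_nonpairs 4 0 0)
    cert_edge_4_0_0"
  by code_simp

lemma cert_edge_4_1_0_valid:
  "check_case_tree 7 [0, 1] (edge_clauses 4 1 0) (edge_known_pairs 4 1 0) (edge_known_nonpairs 4 1 0)
    cert_edge_4_1_0"
  by code_simp

lemma cert_edge_4_0_1_valid:
  "check_case_tree 7 [0, 1] (edge_clauses 4 0 1) (edge_known_pairs 4 0 1) (edge_known_nonpairs 4 0 1)
    cert_edge_4_0_1"
  by code_simp

lemma cert_edge_4_1_1_valid:
  "check_case_tree 8 [0, 1] (edge_clauses 4 1 1) (edge_known_pairs 4 1 1) (edge_known_nonpairs 4 1 1)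
    cert_edge_4_1_1"
  by code_simp

lemma cert_edge_3_1_1_valid:
  "check_case_tree 7 [0, 1] (edge_clauses 3 1 1) (edge_known_pairs 3 1 1) (edge_known_nonpairs 3 1 1)
    cert_edge_3_1_1"
  by code_simp

lemma vertex_case_tree_exists:
  "n \<in> {5, 6} \<Longrightarrow>
    \<exists>t. check_case_tree (Suc n) [0] (no_isolated_clauses (Suc n)) (hub_pairs (Suc n))
      [(1, 2), (1, 3)] t"
  using cert_vertex_5_valid cert_vertex_6_valid by (auto simp: numeral_eq_Suc)

lemma edge_case_tree_exists:
  "(nI, nA, nB) \<in> edge_case_shapes \<Longrightarrow>
    \<exists>t. check_case_tree (2 + nI + nA + nB) [0, 1] (edge_clauses nI nA nB)
      (edge_known_pairs nI nA nB) (edge_known_nonpairs nI nA nB) t"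
  using cert_edge_5_0_0_valid cert_edge_4_0_0_valid cert_edge_4_1_0_valid cert_edge_4_0_1_valid
    cert_edge_4_1_1_valid cert_edge_3_1_1_valid
  by (auto simp: edge_case_shapes_def)

lemma no_isolated_clauses_sound:
  assumes sg: "simple_graph V E" and vs: "length vs = n"
    and no_isolated: "\<forall>x\<in>set (tl vs). \<exists>y\<in>set (tl vs). {x, y} \<in> E"
  shows "\<forall>c\<in>set (no_isolated_clauses n). \<exists>p\<in>set c. pair_at vs p \<in> E"
proof
  fix c assume "c \<in> set (no_isolated_clauses n)"
  then obtain i where i: "1 \<le> i" "i < n"
    and c: "c = map (\<lambda>j. sort_pair (i, j)) (filter (\<lambda>j. j \<noteq> i) [1..<n])"
    by (auto simp: no_isolated_clauses_def)
  have "vs ! i \<in> set (tl vs)" using i vs by (simp add: nth_mem_tl)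
  with no_isolated obtain y where y: "y \<in> set (tl vs)" "{vs ! i, y} \<in> E" by blast
  then obtain k where k: "k < length (tl vs)" "tl vs ! k = y" by (auto simp: in_set_conv_nth)
  define j where "j = Suc k"
  have j: "1 \<le> j" "j < n" "vs ! j = y" using k vs by (auto simp: j_def nth_tl)
  have "j \<noteq> i" using y j edge_ends_distinct[OF sg] by auto
  with i j c have "sort_pair (i, j) \<in> set c" by auto
  moreover have "pair_at vs (sort_pair (i, j)) \<in> E" using y j by simp
  ultimately show "\<exists>p\<in>set c. pair_at vs p \<in> E" by blast
qed

lemma reducible_vertex_of_not_co_matching:
  assumes sg: "simple_graph V E" and w: "w \<in> V" and deg: "degree E w \<in> {5, 6}"
    and no_isolated: "\<forall>x\<in>nbhd E w. \<exists>y\<in>nbhd E w. {x, y} \<in> E"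
    and not_co_matching: "\<not> co_matching E (nbhd E w)"
  shows "reducible V E {w}"
proof -
  let ?N = "nbhd E w"
  from not_co_matching obtain a b c where abc: "a \<in> ?N" "b \<in> ?N" "c \<in> ?N" "distinct [a, b, c]"
    and nonadj: "{a, b} \<notin> E" "{a, c} \<notin> E"
    unfolding co_matching_def by blast
  obtain rs where rs: "set rs = ?N - {a, b, c}" "distinct rs"
    using finite_distinct_list finite_nbhd[OF sg] by (metis finite_Diff)
  define vs where "vs = w # a # b # c # rs"
  have tl_vs: "set (tl vs) = ?N" using rs abc by (auto simp: vs_def)
  have "w \<notin> set (tl vs)" using tl_vs not_in_nbhd_self[OF sg] by simp
  moreover have "distinct (tl vs)" using rs abc by (simp add: vs_def)
  ultimately have dist: "distinct vs" by (simp add: vs_def)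
  have "degree E w = length (tl vs)"
    using distinct_card[of "tl vs"] dist tl_vs by (simp add: distinct_tl degree_def)
  then have len: "length vs = Suc (degree E w)" by (simp add: vs_def)
  have sub: "set vs \<subseteq> V" using w tl_vs nbhd_subset[OF sg] by (auto simp: vs_def)
  have closed: "\<forall>i\<in>set [0]. nbhd E (vs ! i) \<subseteq> set vs" using tl_vs by (auto simp: vs_def)
  have K: "\<forall>p\<in>set (hub_pairs (Suc (degree E w))). pair_at vs p \<in> E"
  proof
    fix p assume "p \<in> set (hub_pairs (Suc (degree E w)))"
    then obtain i where i: "p = (0, i)" "1 \<le> i" "i < length vs" by (auto simp: hub_pairs_def len)
    then have "vs ! i \<in> ?N" using nth_mem_tl[of i vs] tl_vs by simp
    then show "pair_at vs p \<in> E" using i(1) by (simp add: vs_def nbhd_def)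
  qed
  have Z: "\<forall>p\<in>set [(1, 2), (1, 3)]. pair_at vs p \<notin> E" using nonadj by (simp add: vs_def)
  have C: "\<forall>c\<in>set (no_isolated_clauses (Suc (degree E w))). \<exists>p\<in>set c. pair_at vs p \<in> E"
    using no_isolated_clauses_sound[OF sg len] no_isolated tl_vs by simp
  obtain t where "check_case_tree (Suc (degree E w)) [0] (no_isolated_clauses (Suc (degree E w)))
      (hub_pairs (Suc (degree E w))) [(1, 2), (1, 3)] t"
    using vertex_case_tree_exists[OF deg] by blast
  from reducible_of_check_case_tree[OF sg dist sub len closed C this K Z]
  show ?thesis by (simp add: vs_def)
qed

lemma co_matching_clauses_sound:
  assumes vs: "distinct vs" and W: "\<forall>i\<in>set W. i < length vs \<and> vs ! i \<in> N"
    and N: "co_matching E N"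
  shows "\<forall>c\<in>set (co_matching_clauses W). \<exists>p\<in>set c. pair_at vs p \<in> E"
proof
  fix c assume "c \<in> set (co_matching_clauses W)"
  then obtain x y z where xyz: "x \<in> set W" "y \<in> set W" "z \<in> set W" "distinct [x, y, z]"
    and c: "c = [sort_pair (x, y), sort_pair (x, z)]"
    by (auto simp: co_matching_clauses_def)
  have "distinct [vs ! x, vs ! y, vs ! z]"
    using xyz W vs by (auto simp: nth_eq_iff_index_eq)
  then have "{vs ! x, vs ! y} \<in> E \<or> {vs ! x, vs ! z} \<in> E"
    using N xyz W unfolding co_matching_def by blast
  then show "\<exists>p\<in>set c. pair_at vs p \<in> E" using c by auto
qed

lemma nth_edge_layout:
  shows "i \<in> set (common_idx (length Il)) \<Longrightarrow> (u # v # Il @ Al @ Bl) ! i \<in> set Il"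
    and "i \<in> set (private_u_idx (length Il) (length Al)) \<Longrightarrow> (u # v # Il @ Al @ Bl) ! i \<in> set Al"
    and "i \<in> set (private_v_idx (length Il) (length Al) (length Bl)) \<Longrightarrow>
      (u # v # Il @ Al @ Bl) ! i \<in> set Bl"
proof -
  assume "i \<in> set (common_idx (length Il))"
  then have "length [u, v] \<le> i" "i < length [u, v] + length Il" by (auto simp: common_idx_def)
  from nth_append_mem_middle[OF this, of "Al @ Bl"] show "(u # v # Il @ Al @ Bl) ! i \<in> set Il"
    by simp
next
  assume "i \<in> set (private_u_idx (length Il) (length Al))"
  then have "length (u # v # Il) \<le> i" "i < length (u # v # Il) + length Al"
    by (auto simp: private_u_idx_def)
  from nth_append_mem_middle[OF this, of Bl] show "(u # v # Il @ Al @ Bl) ! i \<in> set Al"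
    by simp
next
  assume "i \<in> set (private_v_idx (length Il) (length Al) (length Bl))"
  then have "length (u # v # Il @ Al) \<le> i" "i < length (u # v # Il @ Al) + length Bl"
    by (auto simp: private_v_idx_def)
  from nth_append_mem_middle[OF this, of "[]"] show "(u # v # Il @ Al @ Bl) ! i \<in> set Bl"
    by simp
qed

lemma reducible_edge_of_layout:
  assumes sg: "simple_graph V E" and uv: "{u, v} \<in> E"
    and co: "co_matching E (nbhd E u)" "co_matching E (nbhd E v)"
    and layout: "set Il = nbhd E u \<inter> nbhd E v" "set Al = nbhd E u - nbhd E v - {v}"
      "set Bl = nbhd E v - nbhd E u - {u}" "distinct (Il @ Al @ Bl)"
    and shape: "(length Il, length Al, length Bl) \<in> edge_case_shapes"
  shows "reducible V E {u, v}"
proof -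
  let ?nI = "length Il" and ?nA = "length Al" and ?nB = "length Bl"
  define vs where "vs = u # v # Il @ Al @ Bl"
  have len: "length vs = 2 + ?nI + ?nA + ?nB" by (simp add: vs_def)
  have u_v: "u \<noteq> v" "u \<notin> nbhd E u" "v \<notin> nbhd E v"
    using edge_ends_distinct[OF sg uv] not_in_nbhd_self[OF sg] by auto
  then have dist: "distinct vs" using layout by (auto simp: vs_def)
  have sub: "set vs \<subseteq> V"
    using layout edge_vertices[OF sg uv] nbhd_subset[OF sg, of u] nbhd_subset[OF sg, of v]
    by (auto simp: vs_def)
  have closed: "\<forall>i\<in>set [0, 1]. nbhd E (vs ! i) \<subseteq> set vs"
    using layout uv by (auto simp: vs_def nbhd_def insert_commute)
  note common = nth_edge_layout(1)[of _ Il u v Al Bl, folded vs_def]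
    and private_u = nth_edge_layout(2)[of _ Il Al u v Bl, folded vs_def]
    and private_v = nth_edge_layout(3)[of _ Il Al Bl u v, folded vs_def]
  have K: "\<forall>p\<in>set (edge_known_pairs ?nI ?nA ?nB). pair_at vs p \<in> E"
    using uv common private_u private_v layout
    by (auto simp: edge_known_pairs_def vs_def nbhd_def)
  have Z: "\<forall>p\<in>set (edge_known_nonpairs ?nI ?nA ?nB). pair_at vs p \<notin> E"
    using private_u private_v layout
    by (auto simp: edge_known_nonpairs_def vs_def nbhd_def)
  have C: "\<forall>c\<in>set (edge_clauses ?nI ?nA ?nB). \<exists>p\<in>set c. pair_at vs p \<in> E"
  proof -
    have W1: "\<forall>i\<in>set (1 # common_idx ?nI @ private_u_idx ?nI ?nA).
        i < length vs \<and> vs ! i \<in> nbhd E u"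
      using common private_u layout uv len
      by (auto simp: vs_def nbhd_def common_idx_def private_u_idx_def)
    have W2: "\<forall>i\<in>set (0 # common_idx ?nI @ private_v_idx ?nI ?nA ?nB).
        i < length vs \<and> vs ! i \<in> nbhd E v"
      using common private_v layout uv len
      by (auto simp: vs_def nbhd_def insert_commute common_idx_def private_v_idx_def)
    show ?thesis
      unfolding edge_clauses_def set_append ball_Un
      using co_matching_clauses_sound[OF dist W1 co(1)] co_matching_clauses_sound[OF dist W2 co(2)]
      by blast
  qed
  obtain t where "check_case_tree (2 + ?nI + ?nA + ?nB) [0, 1] (edge_clauses ?nI ?nA ?nB)
      (edge_known_pairs ?nI ?nA ?nB) (edge_known_nonpairs ?nI ?nA ?nB) t"
    using edge_case_tree_exists[OF shape] by blast
  from reducible_of_check_case_tree[OF sg dist sub len closed C this K Z]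
  show ?thesis by (simp add: vs_def)
qed

lemma edge_case_shape:
  fixes nI nA nB :: nat
  assumes "Suc (nI + nA) \<in> {5, 6}" "Suc (nI + nB) \<in> {5, 6}" "nA \<le> 1" "nB \<le> 1"
  shows "(nI, nA, nB) \<in> edge_case_shapes"
proof -
  have "nA = 0 \<or> nA = 1" "nB = 0 \<or> nB = 1" using assms(3,4) by linarith+
  then show ?thesis using assms(1,2) by (elim disjE) (auto simp: edge_case_shapes_def)
qed

lemma reducible_edge_of_co_matching:
  assumes sg: "simple_graph V E" and uv: "{u, v} \<in> E"
    and deg: "degree E u \<in> {5, 6}" "degree E v \<in> {5, 6}"
    and co: "co_matching E (nbhd E u)" "co_matching E (nbhd E v)"
  shows "reducible V E {u, v}"
proof -
  let ?I = "nbhd E u \<inter> nbhd E v"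
    and ?A = "nbhd E u - nbhd E v - {v}" and ?B = "nbhd E v - nbhd E u - {u}"
  have vu: "{v, u} \<in> E" using uv by (simp add: insert_commute)
  obtain Il Al Bl where lists: "set Il = ?I" "set Al = ?A" "set Bl = ?B"
    and "distinct Il" "distinct Al" "distinct Bl"
    using finite_distinct_list finite_nbhd[OF sg] by (metis finite_Diff finite_Int)
  then have dist: "distinct (Il @ Al @ Bl)" by auto
  have split: "nbhd E u = insert v (?I \<union> ?A)" "v \<notin> ?I \<union> ?A"
    "nbhd E v = insert u (?I \<union> ?B)" "u \<notin> ?I \<union> ?B"
    using uv vu not_in_nbhd_self[OF sg, of u] not_in_nbhd_self[OF sg, of v]
    by (auto simp: nbhd_def)
  have "nbhd E u = set (v # Il @ Al)" "distinct (v # Il @ Al)"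
    "nbhd E v = set (u # Il @ Bl)" "distinct (u # Il @ Bl)"
    using split lists dist by auto
  then have "degree E u = Suc (length Il + length Al)" "degree E v = Suc (length Il + length Bl)"
    unfolding degree_def by (simp_all only: distinct_card) simp_all
  moreover have "length Al \<le> 1" "length Bl \<le> 1"
    using card_private_nbhd_le_1[OF sg uv co(1)] card_private_nbhd_le_1[OF sg vu co(2)]
      lists(2,3) distinct_card[OF \<open>distinct Al\<close>] distinct_card[OF \<open>distinct Bl\<close>]
    by simp_all
  ultimately have "(length Il, length Al, length Bl) \<in> edge_case_shapes"
    using deg by (intro edge_case_shape) simp_all
  from reducible_edge_of_layout[OF sg uv co lists dist this] show ?thesis .
qed

theorem proposition5p2:
  fixes V :: "'a set" and E :: "'a set set" and u v :: 'a
  assumes "simple_graph V E"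
    and "robust V E"
    and "{u, v} \<in> E"
    and "degree E u \<le> 6" and "degree E v \<le> 6"
  shows "reducible V E {u} \<or> reducible V E {v} \<or> reducible V E {u, v}"
proof -
  have vu: "{v, u} \<in> E" using assms(3) by (simp add: insert_commute)
  have deg: "degree E u \<in> {5, 6}" "degree E v \<in> {5, 6}"
    using robust_degree_ge_5[OF assms(1,2,3)] robust_degree_ge_5[OF assms(1,2) vu] assms(4,5)
    by auto
  have V: "u \<in> V" "v \<in> V" using edge_vertices[OF assms(1,3)] by auto
  show ?thesis
  proof (cases "co_matching E (nbhd E u) \<and> co_matching E (nbhd E v)")
    case True
    then show ?thesis using reducible_edge_of_co_matching[OF assms(1,3) deg] by blast
  next
    case False
    note no_isolated = robust_nbhd_no_isolated[OF assms(2)]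
    from False consider "\<not> co_matching E (nbhd E u)" | "\<not> co_matching E (nbhd E v)" by blast
    then show ?thesis
    proof cases
      case 1
      with reducible_vertex_of_not_co_matching[OF assms(1) V(1) deg(1) no_isolated[OF V(1)]]
      show ?thesis by blast
    next
      case 2
      with reducible_vertex_of_not_co_matching[OF assms(1) V(2) deg(2) no_isolated[OF V(2)]]
      show ?thesis by blast
    qed
  qed
qed

end
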